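(* Let $0<q<1$, let $g:\mathbb{N}\to\mathbb{R}$ be any function with $g(n)\to\infty$ (e.g. $g(n)=\log^2 n$), let $\Pi_n\sim\mathrm{Mallows}(n,q)$, and let $\Pi,\Pi'\sim\mathrm{Mallows}(\mathbb{N},q)$ be independent. With $r_n(i):=n+1-i$, there is a coupling of $\Pi_n,\Pi,\Pi'$ (with $\Pi,\Pi'$ independent) such that $$\mathbb{P}\Bigl(\Pi_n(i)=\Pi(i)\ \text{for all }1\le i\le n/2-g(n),\ \text{and}\ \Pi_n(i)=(r_n\circ\Pi'\circ r_n)(i)\ \text{for all }n/2+g(n)\le i\le n\Bigr)=1-o(1)$$ as $n\to\infty$.
   Context: For $q>0$, $\Pi_n\sim\mathrm{Mallows}(n,q)$ means $\mathbb{P}(\Pi_n=\pi)\propto q^{\mathrm{inv}(\pi)}$ over permutations $\pi$ of $[n]=\{1,\dots,n\}$, where $\mathrm{inv}(\pi)$ is the number of pairs $i<j$ with $\pi(i)>\pi(j)$. For $0<q<1$, $\Pi\sim\mathrm{Mallows}(\mathbb{N},q)$ is the random injection $\mathbb{N}\to\mathbb{N}$ constructed as follows: let $Z_1,Z_2,\dots$ be i.i.d. geometric with $\mathbb{P}(Z_i=k)=(1-q)q^{k-1}$, $k\ge1$; set $\Pi(1)=Z_1$ and, for $i>1$, let $\Pi(i)$ be the $Z_i$-th smallest element of $\mathbb{N}\setminus\{\Pi(1),\dots,\Pi(i-1)\}$. The composition $r_n\circ\Pi'\circ r_n$ is evaluated only at $i$ with $r_n(i)\ge1$. *)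

theory Defs
  imports "HOL-Probability.Probability"
begin

text \<open>Permutations of [n] = {1..n} are represented as functions nat => nat that
  permute {1..n} (and are the identity elsewhere).\<close>

definition inv_count :: "nat \<Rightarrow> (nat \<Rightarrow> nat) \<Rightarrow> nat" where
  "inv_count n \<pi> = card {(i, j). 1 \<le> i \<and> i < j \<and> j \<le> n \<and> \<pi> i > \<pi> j}"

definition mallows_weight :: "nat \<Rightarrow> real \<Rightarrow> (nat \<Rightarrow> nat) \<Rightarrow> real" where
  "mallows_weight n q \<pi> =
     (if \<pi> permutes {1..n}
      then q ^ inv_count n \<pi> / (\<Sum>\<sigma>\<in>{\<sigma>. \<sigma> permutes {1..n}}. q ^ inv_count n \<sigma>)
      else 0)"

definition mallows :: "nat \<Rightarrow> real \<Rightarrow> (nat \<Rightarrow> nat) pmf" where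
  "mallows n q = embed_pmf (mallows_weight n q)"

abbreviation NN :: "(nat \<Rightarrow> nat) measure" where
  "NN \<equiv> PiM UNIV (\<lambda>_. count_space UNIV)"

text \<open>Here Z k (k = 0,1,...) is
  0-based geometric, so Z_{k+1} = Z k + 1 in the paper's notation; Pi(i) is the
  (Z_i)-th smallest element of {1,2,...} minus the previously chosen values, i.e.
  enumerate (...) (Z (i-1)) (enumerate is 0-indexed).\<close>
fun mal_list :: "(nat \<Rightarrow> nat) \<Rightarrow> nat \<Rightarrow> nat list" where
  "mal_list Z 0 = []"
| "mal_list Z (Suc k) = mal_list Z k @ [enumerate ({1..} - set (mal_list Z k)) (Z k)]"

definition mal_inj :: "(nat \<Rightarrow> nat) \<Rightarrow> nat \<Rightarrow> nat" where
  "mal_inj Z i = (if i \<ge> 1 then mal_list Z i ! (i - 1) else 0)"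

definition mallows_N :: "real \<Rightarrow> (nat \<Rightarrow> nat) measure" where
  "mallows_N q = distr (PiM UNIV (\<lambda>_. measure_pmf (geometric_pmf (1 - q)))) NN mal_inj"

definition good_event :: "(nat \<Rightarrow> real) \<Rightarrow> nat \<Rightarrow> ((nat \<Rightarrow> nat) \<times> (nat \<Rightarrow> nat) \<times> (nat \<Rightarrow> nat)) set" where
  "good_event g n = {(x, y, y').
      (\<forall>i. 1 \<le> i \<and> real i \<le> real n / 2 - g n \<longrightarrow> x i = y i) \<and>
      (\<forall>i. real n / 2 + g n \<le> real i \<and> i \<le> n \<longrightarrow>
            int (x i) = int n + 1 - int (y' (n + 1 - i)))}"

end

theory Submission
  imports Defs
begin

text \<open>Mallows(n,q) can be sampled from two independent i.i.d. geometric sequences Z and Z' by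
  filling the positions from both ends inwards, the left end choosing its value by the rank
  Z t mod m among the unused values and the right end by the reverse rank Z' t mod (m-1). A
  given permutation arises exactly when each Z t and Z' t lies in a prescribed residue class;
  these probabilities multiply to a constant times q^inv, because the residues are the numbers
  of inversions contributed by the two ends.

  Feeding the same Z into the construction of Mallows(N,q), and Z' into the reflected one, gives
  the coupling: as long as Z t and Z' t stay below n/2 - t, the values taken from the left are
  at most n/2 and those taken from the right exceed n/2, so the two ends never see each other
  and both constructions make the same choices. A failure during the first n/2 - g(n) steps has
  probability O(q^g(n)).\<close>

section \<open>Ranks in sets of natural numbers\<close>

definition rank_in :: "nat set \<Rightarrow> nat \<Rightarrow> nat" where
  "rank_in S x = card {y\<in>S. y < x}"

lemma rank_in_enumerate:
  fixes S :: "nat set"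
  assumes "infinite S \<or> n < card S"
  shows "rank_in S (enumerate S n) = n"
proof -
  define valid where "valid j \<longleftrightarrow> infinite S \<or> j < card S" for j
  have less_iff: "enumerate S i < enumerate S j \<longleftrightarrow> i < j" if "valid i" "valid j" for i j
  proof (cases "finite S")
    case True
    then show ?thesis using that finite_enumerate_mono_iff unfolding valid_def by blast
  qed simp
  have mem: "enumerate S j \<in> S" if "valid j" for j
  proof (cases "finite S")
    case True
    then show ?thesis using that finite_enumerate_in_set unfolding valid_def by blast
  qed (rule enumerate_in_set)
  have valid_le: "valid j" if "j \<le> n" for j using assms that unfolding valid_def by auto
  have "{y\<in>S. y < enumerate S n} = enumerate S ` {..<n}"
  proof (intro equalityI subsetI)
    fix y assume y: "y \<in> {y\<in>S. y < enumerate S n}"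
    then obtain j where j: "valid j" "enumerate S j = y"
      using enumerate_Ex finite_enumerate_Ex unfolding valid_def by (metis mem_Collect_eq)
    then have "j < n" using y less_iff[OF j(1) valid_le[OF order_refl]] by simp
    then show "y \<in> enumerate S ` {..<n}" using j(2) by blast
  next
    fix y assume "y \<in> enumerate S ` {..<n}"
    then obtain j where j: "j < n" "y = enumerate S j" by blast
    then have "valid j" using valid_le by simp
    then show "y \<in> {y\<in>S. y < enumerate S n}"
      using j mem[of j] less_iff[of j n] valid_le[OF order_refl] by simp
  qed
  moreover have "inj_on (enumerate S) {..<n}"
  proof (rule linorder_inj_onI')
    fix i j :: nat assume "i \<in> {..<n}" "j \<in> {..<n}" "i < j"
    then show "enumerate S i \<noteq> enumerate S j" using less_iff[of i j] valid_le by simp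
  qed
  ultimately show ?thesis unfolding rank_in_def by (simp add: card_image)
qed

lemma enumerate_rank_in:
  fixes S :: "nat set"
  assumes "x \<in> S"
  shows "enumerate S (rank_in S x) = x"
proof -
  obtain j where j: "infinite S \<or> j < card S" "enumerate S j = x"
  proof (cases "finite S")
    case True
    then show ?thesis using that finite_enumerate_Ex[OF True assms] by blast
  next
    case False
    then show ?thesis using that enumerate_Ex[OF False assms] by blast
  qed
  then have "rank_in S x = j" using rank_in_enumerate by blast
  with j show ?thesis by simp
qed

lemma enumerate_eq_iff_card_less:
  fixes S :: "nat set"
  assumes "finite S" "x \<in> S" "k < card S"
  shows "enumerate S k = x \<longleftrightarrow> card {y\<in>S. y < x} = k"
  using rank_in_enumerate[of S k] enumerate_rank_in[OF assms(2)] assms(1,3)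
  unfolding rank_in_def by auto

lemma card_less_plus_card_greater:
  fixes S :: "nat set"
  assumes "finite S" "x \<in> S"
  shows "card {y\<in>S. y < x} + card {y\<in>S. y > x} + 1 = card S"
proof -
  have fin: "finite {y\<in>S. y < x}" "finite {y\<in>S. y > x}" using assms(1) by auto
  have "S = ({y\<in>S. y < x} \<union> {y\<in>S. y > x}) \<union> {x}" using assms(2) by auto
  also have "card \<dots> = card ({y\<in>S. y < x} \<union> {y\<in>S. y > x}) + 1"
    by (subst card_Un_disjoint) (use fin in auto)
  also have "card ({y\<in>S. y < x} \<union> {y\<in>S. y > x}) = card {y\<in>S. y < x} + card {y\<in>S. y > x}"
    by (rule card_Un_disjoint) (use fin in auto)
  finally show ?thesis by simp
qed

lemma enumerate_eq_iff_card_greater: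
  fixes S :: "nat set"
  assumes "finite S" "x \<in> S" "k < card S"
  shows "enumerate S (card S - 1 - k) = x \<longleftrightarrow> card {y\<in>S. y > x} = k"
  using enumerate_eq_iff_card_less[OF assms(1,2), of "card S - 1 - k"]
    card_less_plus_card_greater[OF assms(1,2)] assms(3) by auto

lemma card_filter_image:
  assumes "inj_on f A"
  shows "card {y \<in> f ` A. P y} = card {x\<in>A. P (f x)}"
proof -
  have "{y \<in> f ` A. P y} = f ` {x\<in>A. P (f x)}" by auto
  moreover have "inj_on f {x\<in>A. P (f x)}" by (rule inj_on_subset[OF assms]) auto
  ultimately show ?thesis by (simp add: card_image)
qed

section \<open>The Mallows(N,q) injection\<close>

lemma length_mal_list [simp]: "length (mal_list Z k) = k"
  by (induction k) auto

lemma nth_mal_list: "i < k \<Longrightarrow> mal_list Z k ! i = mal_inj Z (Suc i)"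
  by (induction k) (auto simp: nth_append mal_inj_def less_Suc_eq)

lemma set_mal_list: "set (mal_list Z k) = mal_inj Z ` {1..k}"
proof -
  have "set (mal_list Z k) = (\<lambda>i. mal_list Z k ! i) ` {..<k}" by (auto simp: set_conv_nth)
  also have "\<dots> = (\<lambda>i. mal_inj Z (Suc i)) ` {..<k}"
    by (rule image_cong) (simp_all add: nth_mal_list)
  also have "\<dots> = mal_inj Z ` ((\<lambda>i. Suc i) ` {..<k})" by (simp add: image_image)
  also have "(\<lambda>i. Suc i) ` {..<k} = {1..k}" by (simp add: lessThan_atLeast0 atLeastLessThanSuc_atLeastAtMost)
  finally show ?thesis .
qed

lemma mal_inj_Suc: "mal_inj Z (Suc k) = enumerate ({1..} - mal_inj Z ` {1..k}) (Z k)"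
proof -
  have "mal_inj Z (Suc k) = mal_list Z (Suc k) ! k" by (simp add: mal_inj_def)
  also have "\<dots> = enumerate ({1..} - set (mal_list Z k)) (Z k)" by (simp add: nth_append)
  finally show ?thesis by (simp only: set_mal_list)
qed

lemma infinite_atLeast_diff_finite: "finite F \<Longrightarrow> infinite ({a::nat..} - F)"
  by (simp add: Diff_infinite_finite infinite_Ici)

lemma mal_inj_Suc_mem: "mal_inj Z (Suc k) \<in> {1..} - mal_inj Z ` {1..k}"
  unfolding mal_inj_Suc by (rule enumerate_in_set, rule infinite_atLeast_diff_finite) simp

lemma mal_inj_ge_1: "1 \<le> k \<Longrightarrow> 1 \<le> mal_inj Z k"
  using mal_inj_Suc_mem[of Z "k - 1"] by simp

lemma inj_on_mal_inj: "inj_on (mal_inj Z) {1..}"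
proof (rule linorder_inj_onI')
  fix a b :: nat assume "a \<in> {1..}" "b \<in> {1..}" "a < b"
  then have "a \<in> {1..b - 1}" "Suc (b - 1) = b" by auto
  then have "mal_inj Z a \<in> mal_inj Z ` {1..b - 1}" "mal_inj Z b \<notin> mal_inj Z ` {1..b - 1}"
    using mal_inj_Suc_mem[of Z "b - 1"] by auto
  then show "mal_inj Z a \<noteq> mal_inj Z b" by metis
qed

lemma rank_in_mal_inj: "rank_in ({1..} - mal_inj Z ` {1..k}) (mal_inj Z (Suc k)) = Z k"
  unfolding mal_inj_Suc by (rule rank_in_enumerate, rule disjI1, rule infinite_atLeast_diff_finite) simp

lemma mal_inj_Suc_le: "mal_inj Z (Suc k) \<le> Suc k + Z k"
proof -
  define U where "U = {1..} - mal_inj Z ` {1..k}"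
  define A where "A = mal_inj Z (Suc k)"
  have "{1..<A} \<subseteq> {y\<in>U. y < A} \<union> mal_inj Z ` {1..k}" unfolding U_def by auto
  then have "card {1..<A} \<le> card ({y\<in>U. y < A} \<union> mal_inj Z ` {1..k})"
    by (intro card_mono) (auto simp: U_def)
  also have "\<dots> \<le> card {y\<in>U. y < A} + card (mal_inj Z ` {1..k})" by (rule card_Un_le)
  also have "\<dots> \<le> Z k + k"
    using rank_in_mal_inj[of Z k] card_image_le[of "{1..k}" "mal_inj Z"]
    unfolding rank_in_def U_def A_def by simp
  finally show ?thesis unfolding A_def by simp
qed

section \<open>Filling a permutation from both ends\<close>

lemma enumerate_image_eq_iff_less:
  fixes \<tau> :: "'a \<Rightarrow> nat"
  assumes "inj_on \<tau> I" "finite I" "i \<in> I" "k < card I"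
  shows "enumerate (\<tau> ` I) k = \<tau> i \<longleftrightarrow> card {j\<in>I. \<tau> j < \<tau> i} = k"
  using enumerate_eq_iff_card_less[of "\<tau> ` I" "\<tau> i" k] card_filter_image[OF assms(1)] assms
  by (simp add: card_image)

lemma enumerate_image_eq_iff_greater:
  fixes \<tau> :: "'a \<Rightarrow> nat"
  assumes "inj_on \<tau> I" "finite I" "i \<in> I" "k < card I"
  shows "enumerate (\<tau> ` I) (card I - 1 - k) = \<tau> i \<longleftrightarrow> card {j\<in>I. \<tau> j > \<tau> i} = k"
  using enumerate_eq_iff_card_greater[of "\<tau> ` I" "\<tau> i" k] card_filter_image[OF assms(1)] assms
  by (simp add: card_image)

lemma bij_betw_fun_upd_insert:
  assumes "bij_betw f A B" "a \<notin> A" "b \<notin> B"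
  shows "bij_betw (f(a := b)) (insert a A) (insert b B)"
proof -
  have "bij_betw (f(a := b)) A B \<longleftrightarrow> bij_betw f A B" by (rule bij_betw_cong) (use assms(2) in auto)
  then have "bij_betw (f(a := b)) A B" using assms(1) by simp
  then have "bij_betw (f(a := b)) (A \<union> {a}) (B \<union> {b})"
    by (rule bij_betw_combine) (use assms(3) in auto)
  then show ?thesis by simp
qed

lemma enumerate_singleton [simp]: "enumerate {a::nat} 0 = a"
  by (simp add: enumerate_0 Least_equality)

text \<open>With m = |T|, position t+1 receives the (Z t mod m)-th smallest element of T and
  position t+m the (Z' t mod (m-1))-th largest of the remaining ones (both counted from 0), and
  the positions strictly between are filled recursively from what is left. Started at t = 0 with
  T = {1..n} and i.i.d. geometric Z, Z', this samples Mallows(n,q).\<close>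
fun inward_fill :: "(nat \<Rightarrow> nat) \<Rightarrow> (nat \<Rightarrow> nat) \<Rightarrow> nat \<Rightarrow> nat \<Rightarrow> nat set \<Rightarrow> nat \<Rightarrow> nat" where
  "inward_fill Z Z' t 0 T = (\<lambda>_. 0)"
| "inward_fill Z Z' t (Suc 0) T = (\<lambda>_. 0)(Suc t := enumerate T 0)"
| "inward_fill Z Z' t (Suc (Suc m)) T =
    (let l = enumerate T (Z t mod Suc (Suc m));
         r = enumerate (T - {l}) (m - Z' t mod Suc m)
     in (inward_fill Z Z' (Suc t) m (T - {l} - {r}))(Suc t := l, Suc t + Suc m := r))"

lemma inward_fill_Suc_Suc:
  assumes "l = enumerate T (Z t mod Suc (Suc m))" "r = enumerate (T - {l}) (m - Z' t mod Suc m)"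
  shows "inward_fill Z Z' t (Suc (Suc m)) T =
    (inward_fill Z Z' (Suc t) m (T - {l} - {r}))(Suc t := l, Suc t + Suc m := r)"
  using assms by (simp add: Let_def)

declare inward_fill.simps(3) [simp del]

lemma bij_betw_inward_fill:
  "finite T \<Longrightarrow> card T = m \<Longrightarrow> bij_betw (inward_fill Z Z' t m T) {Suc t..t+m} T"
proof (induction Z Z' t m T rule: inward_fill.induct)
  case (1 Z Z' t T)
  then show ?case by (simp add: bij_betw_def)
next
  case (2 Z Z' t T)
  then obtain a where "T = {a}" by (metis card_1_singletonE One_nat_def)
  then show ?case by simp
next
  case (3 Z Z' t m T)
  define l where "l = enumerate T (Z t mod Suc (Suc m))"
  define r where "r = enumerate (T - {l}) (m - Z' t mod Suc m)"
  define f where "f = inward_fill Z Z' (Suc t) m (T - {l} - {r})"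
  have l: "l \<in> T" unfolding l_def using "3.prems" by (intro finite_enumerate_in_set) auto
  have r: "r \<in> T - {l}" unfolding r_def using "3.prems" l by (intro finite_enumerate_in_set) auto
  have "bij_betw f {Suc (Suc t)..Suc t + m} (T - {l} - {r})"
    unfolding f_def using "3.prems" l r by (intro "3.IH"[OF l_def r_def]) auto
  then have "bij_betw ((f(Suc t + Suc m := r))(Suc t := l))
      (insert (Suc t) (insert (Suc t + Suc m) {Suc (Suc t)..Suc t + m}))
      (insert l (insert r (T - {l} - {r})))"
    using r by (intro bij_betw_fun_upd_insert) auto
  moreover have "insert (Suc t) (insert (Suc t + Suc m) {Suc (Suc t)..Suc t + m}) = {Suc t..t + Suc (Suc m)}"
    by auto
  moreover have "insert l (insert r (T - {l} - {r})) = T" using l r by auto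
  moreover have "inward_fill Z Z' t (Suc (Suc m)) T = (f(Suc t + Suc m := r))(Suc t := l)"
    unfolding inward_fill_Suc_Suc[where Z=Z and Z'=Z' and t=t, OF l_def r_def] f_def
    by (rule fun_upd_twist) simp
  ultimately show ?case by (simp only:)
qed

text \<open>left_code \<tau> t m is the rank of \<tau> (t+1) among the values of \<tau> on {t+1..t+m}, and
  right_code \<tau> t m the reverse rank of \<tau> (t+m) among those on {t+2..t+m}; they count the
  inversions that the two end positions contribute.\<close>
definition left_code :: "(nat \<Rightarrow> nat) \<Rightarrow> nat \<Rightarrow> nat \<Rightarrow> nat" where
  "left_code \<tau> t m = card {j\<in>{Suc (Suc t)..t+m}. \<tau> j < \<tau> (Suc t)}"

definition right_code :: "(nat \<Rightarrow> nat) \<Rightarrow> nat \<Rightarrow> nat \<Rightarrow> nat" where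
  "right_code \<tau> t m = card {j\<in>{Suc (Suc t)..t+m-1}. \<tau> j > \<tau> (t+m)}"

definition codes_match :: "(nat \<Rightarrow> nat) \<Rightarrow> (nat \<Rightarrow> nat) \<Rightarrow> (nat \<Rightarrow> nat) \<Rightarrow> nat \<Rightarrow> nat \<Rightarrow> bool" where
  "codes_match Z Z' \<tau> t m \<longleftrightarrow>
     (\<forall>s<(m+1) div 2. Z (t+s) mod (m - 2 * s) = left_code \<tau> (t+s) (m - 2 * s)) \<and>
     (\<forall>s<m div 2. Z' (t+s) mod (m - 2 * s - 1) = right_code \<tau> (t+s) (m - 2 * s))"

lemma codes_match_Suc_Suc:
  "codes_match Z Z' \<tau> t (Suc (Suc m)) \<longleftrightarrow>
     Z t mod Suc (Suc m) = left_code \<tau> t (Suc (Suc m)) \<and>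
     Z' t mod Suc m = right_code \<tau> t (Suc (Suc m)) \<and> codes_match Z Z' \<tau> (Suc t) m"
proof -
  have "(Suc (Suc m) + 1) div 2 = Suc ((m + 1) div 2)" "Suc (Suc m) div 2 = Suc (m div 2)" by auto
  moreover have "(\<forall>s<Suc k. P s) \<longleftrightarrow> P 0 \<and> (\<forall>s<k. P (Suc s))" for P and k :: nat
    using less_Suc_eq_0_disj by auto
  ultimately show ?thesis unfolding codes_match_def by (simp add: algebra_simps) blast
qed

lemma left_code_less: "0 < m \<Longrightarrow> left_code \<sigma> t m < m"
proof -
  assume "0 < m"
  have "left_code \<sigma> t m \<le> card {Suc (Suc t)..t + m}" unfolding left_code_def by (rule card_mono) auto
  then show ?thesis using \<open>0 < m\<close> by simp
qed

lemma right_code_less: "1 < m \<Longrightarrow> right_code \<sigma> t m < m - 1"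
proof -
  assume "1 < m"
  have "right_code \<sigma> t m \<le> card {Suc (Suc t)..t + m - 1}" unfolding right_code_def by (rule card_mono) auto
  then show ?thesis using \<open>1 < m\<close> by simp
qed

lemma enumerate_eq_first_iff_left_code:
  assumes "bij_betw \<tau> {Suc t..t + Suc (Suc m)} T" "k < Suc (Suc m)"
  shows "enumerate T k = \<tau> (Suc t) \<longleftrightarrow> k = left_code \<tau> t (Suc (Suc m))"
proof -
  have inj: "inj_on \<tau> {Suc t..t + Suc (Suc m)}" and T: "T = \<tau> ` {Suc t..t + Suc (Suc m)}"
    using assms(1) by (auto simp: bij_betw_def)
  have "{j\<in>{Suc t..t + Suc (Suc m)}. \<tau> j < \<tau> (Suc t)} = {j\<in>{Suc (Suc t)..t + Suc (Suc m)}. \<tau> j < \<tau> (Suc t)}"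
    by (auto simp: Suc_le_eq le_less)
  then show ?thesis
    unfolding T left_code_def using enumerate_image_eq_iff_less[OF inj, of "Suc t" k] assms(2)
    by auto
qed

lemma enumerate_eq_last_iff_right_code:
  assumes "bij_betw \<tau> {Suc t..t + Suc (Suc m)} T" "k < Suc m"
  shows "enumerate (T - {\<tau> (Suc t)}) (m - k) = \<tau> (t + Suc (Suc m)) \<longleftrightarrow> k = right_code \<tau> t (Suc (Suc m))"
proof -
  define hi where "hi = t + Suc (Suc m)"
  have inj: "inj_on \<tau> {Suc t..hi}" and T: "T = \<tau> ` {Suc t..hi}"
    using assms(1) by (auto simp: bij_betw_def hi_def)
  have "{Suc t..hi} - {Suc t} = {Suc (Suc t)..hi}" by auto
  then have T1: "T - {\<tau> (Suc t)} = \<tau> ` {Suc (Suc t)..hi}"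
    unfolding T using inj_on_image_set_diff[OF inj, of "{Suc t..hi}" "{Suc t}"] by (simp add: hi_def)
  have inj1: "inj_on \<tau> {Suc (Suc t)..hi}" by (rule inj_on_subset[OF inj]) auto
  have k: "k < card {Suc (Suc t)..hi}" using assms(2) by (simp add: hi_def)
  have "enumerate (T - {\<tau> (Suc t)}) (m - k) = \<tau> hi \<longleftrightarrow> card {j\<in>{Suc (Suc t)..hi}. \<tau> j > \<tau> hi} = k"
    using enumerate_image_eq_iff_greater[OF inj1 _ _ k] unfolding T1 by (simp add: hi_def)
  also have "card {j\<in>{Suc (Suc t)..hi}. \<tau> j > \<tau> hi} = right_code \<tau> t (Suc (Suc m))"
    unfolding right_code_def by (rule arg_cong[where f=card]) (auto simp: hi_def le_Suc_eq)
  finally show ?thesis unfolding hi_def by auto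
qed

lemma inward_fill_eq_iff_codes_match:
  "bij_betw \<tau> {Suc t..t+m} T \<Longrightarrow>
   (\<forall>i\<in>{Suc t..t+m}. inward_fill Z Z' t m T i = \<tau> i) \<longleftrightarrow> codes_match Z Z' \<tau> t m"
proof (induction Z Z' t m T arbitrary: \<tau> rule: inward_fill.induct)
  case (1 Z Z' t T)
  then show ?case by (simp add: codes_match_def)
next
  case (2 Z Z' t T)
  then have "T = {\<tau> (Suc t)}" by (auto simp: bij_betw_def)
  then show ?case by (simp add: codes_match_def left_code_def)
next
  case (3 Z Z' t m T)
  define hi where "hi = Suc t + Suc m"
  define l where "l = enumerate T (Z t mod Suc (Suc m))"
  define r where "r = enumerate (T - {l}) (m - Z' t mod Suc m)"
  have left: "l = \<tau> (Suc t) \<longleftrightarrow> Z t mod Suc (Suc m) = left_code \<tau> t (Suc (Suc m))"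
    unfolding l_def using enumerate_eq_first_iff_left_code[OF "3.prems"] by simp
  have right: "r = \<tau> hi \<longleftrightarrow> Z' t mod Suc m = right_code \<tau> t (Suc (Suc m))" if "l = \<tau> (Suc t)"
    unfolding r_def that hi_def using enumerate_eq_last_iff_right_code[OF "3.prems"] by simp
  have inner: "(\<forall>i\<in>{Suc (Suc t)..Suc t + m}. inward_fill Z Z' (Suc t) m (T - {l} - {r}) i = \<tau> i)
      \<longleftrightarrow> codes_match Z Z' \<tau> (Suc t) m" if "l = \<tau> (Suc t)" "r = \<tau> hi"
  proof (rule "3.IH"[OF l_def r_def])
    have inj: "inj_on \<tau> {Suc t..t + Suc (Suc m)}" and T: "T = \<tau> ` {Suc t..t + Suc (Suc m)}"
      using "3.prems" by (auto simp: bij_betw_def)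
    have "{Suc t..t + Suc (Suc m)} - {Suc t, hi} = {Suc (Suc t)..Suc t + m}" by (auto simp: hi_def)
    moreover have "T - {l} - {r} = \<tau> ` {Suc t..t + Suc (Suc m)} - \<tau> ` {Suc t, hi}"
      unfolding that T by auto
    ultimately have "T - {l} - {r} = \<tau> ` {Suc (Suc t)..Suc t + m}"
      using inj_on_image_set_diff[OF inj, of "{Suc t..t + Suc (Suc m)}" "{Suc t, hi}"] by (simp add: hi_def)
    then show "bij_betw \<tau> {Suc (Suc t)..Suc t + m} (T - {l} - {r})"
      using inj_on_subset[OF inj] by (auto simp: bij_betw_def)
  qed
  have "{Suc t..t + Suc (Suc m)} = insert (Suc t) (insert hi {Suc (Suc t)..Suc t + m})"
    by (auto simp: hi_def)
  then have "(\<forall>i\<in>{Suc t..t + Suc (Suc m)}. inward_fill Z Z' t (Suc (Suc m)) T i = \<tau> i) \<longleftrightarrow>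
      l = \<tau> (Suc t) \<and> r = \<tau> hi \<and>
      (\<forall>i\<in>{Suc (Suc t)..Suc t + m}. inward_fill Z Z' (Suc t) m (T - {l} - {r}) i = \<tau> i)"
    by (auto simp: inward_fill_Suc_Suc[where Z=Z and Z'=Z' and t=t, OF l_def r_def] hi_def)
  then show ?case unfolding codes_match_Suc_Suc using left right inner by blast
qed

definition inversions_on :: "(nat \<Rightarrow> nat) \<Rightarrow> nat set \<Rightarrow> nat" where
  "inversions_on \<tau> P = card {(i, j). i \<in> P \<and> j \<in> P \<and> i < j \<and> \<tau> j < \<tau> i}"

lemma inversions_on_Suc_Suc:
  "inversions_on \<tau> {Suc t..t + Suc (Suc m)} =
     left_code \<tau> t (Suc (Suc m)) + right_code \<tau> t (Suc (Suc m)) + inversions_on \<tau> {Suc (Suc t)..Suc t + m}"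
proof -
  define hi where "hi = t + Suc (Suc m)"
  define S1 where "S1 = Pair (Suc t) ` {j\<in>{Suc (Suc t)..hi}. \<tau> j < \<tau> (Suc t)}"
  define S2 where "S2 = (\<lambda>i. (i, hi)) ` {j\<in>{Suc (Suc t)..hi - 1}. \<tau> j > \<tau> hi}"
  define S3 where "S3 = {(i, j). i \<in> {Suc (Suc t)..Suc t + m} \<and> j \<in> {Suc (Suc t)..Suc t + m} \<and> i < j \<and> \<tau> j < \<tau> i}"
  have "{(i, j). i \<in> {Suc t..hi} \<and> j \<in> {Suc t..hi} \<and> i < j \<and> \<tau> j < \<tau> i} = S1 \<union> S2 \<union> S3"
  proof (intro equalityI subsetI)
    fix x assume "x \<in> {(i, j). i \<in> {Suc t..hi} \<and> j \<in> {Suc t..hi} \<and> i < j \<and> \<tau> j < \<tau> i}"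
    then obtain i j where x: "x = (i, j)" "i \<in> {Suc t..hi}" "j \<in> {Suc t..hi}" "i < j" "\<tau> j < \<tau> i"
      by auto
    consider "i = Suc t" | "i \<noteq> Suc t" "j = hi" | "i \<noteq> Suc t" "j \<noteq> hi" by blast
    then show "x \<in> S1 \<union> S2 \<union> S3"
    proof cases
      case 1
      then have "x \<in> S1" unfolding S1_def using x by auto
      then show ?thesis by simp
    next
      case 2
      then have "x \<in> S2" unfolding S2_def using x by auto
      then show ?thesis by simp
    next
      case 3
      then have "x \<in> S3" unfolding S3_def using x by (auto simp: hi_def)
      then show ?thesis by simp
    qed
  qed (auto simp: S1_def S2_def S3_def hi_def)
  moreover have "finite S1" "finite S2" "finite S3"
    unfolding S1_def S2_def S3_def
    by (auto intro: finite_subset[of _ "{Suc (Suc t)..Suc t + m} \<times> {Suc (Suc t)..Suc t + m}"])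
  moreover have "S1 \<inter> S2 = {}" "(S1 \<union> S2) \<inter> S3 = {}"
    unfolding S1_def S2_def S3_def hi_def by auto
  moreover have "card S1 = left_code \<tau> t (Suc (Suc m))" "card S2 = right_code \<tau> t (Suc (Suc m))"
    unfolding S1_def S2_def left_code_def right_code_def hi_def by (simp_all add: card_image inj_on_def)
  ultimately show ?thesis unfolding inversions_on_def S3_def hi_def by (simp add: card_Un_disjoint)
qed

lemma inversions_on_eq_sum_codes:
  "inversions_on \<tau> {Suc t..t+m} =
    (\<Sum>s<(m+1) div 2. left_code \<tau> (t+s) (m - 2 * s)) + (\<Sum>s<m div 2. right_code \<tau> (t+s) (m - 2 * s))"
proof (induction m arbitrary: t rule: nat_induct2)
  case 0
  then show ?case by (simp add: inversions_on_def)
next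
  case 1
  show ?case by (auto simp: inversions_on_def left_code_def card_eq_0_iff)
next
  case (step m)
  have halves: "(Suc (Suc m) + 1) div 2 = Suc ((m + 1) div 2)" "Suc (Suc m) div 2 = Suc (m div 2)"
    by auto
  show ?case
    unfolding add_2_eq_Suc' inversions_on_Suc_Suc step[of "Suc t"] halves sum.lessThan_Suc_shift
    by (simp add: algebra_simps)
qed

lemma inv_count_eq_inversions_on: "inv_count n \<tau> = inversions_on \<tau> {1..n}"
proof -
  have "{(i, j). 1 \<le> i \<and> i < j \<and> j \<le> n \<and> \<tau> i > \<tau> j} =
      {(i, j). i \<in> {1..n} \<and> j \<in> {1..n} \<and> i < j \<and> \<tau> j < \<tau> i}"
    by auto
  then show ?thesis unfolding inv_count_def inversions_on_def by simp
qed

section \<open>Agreement with the one-sided constructions\<close>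

context
  fixes n m0 c :: nat and Z Z' :: "nat \<Rightarrow> nat"
  assumes m0_le: "2 * m0 \<le> n" and c_le: "c \<le> n"
    and left_small: "\<And>k. k \<in> {1..m0} \<Longrightarrow> mal_inj Z k \<le> c"
    and right_small: "\<And>k. k \<in> {1..m0} \<Longrightarrow> mal_inj Z' k \<le> n - c"
begin

text \<open>During the first m0 steps the values taken from the left are at most c and the
  reflected values taken from the right exceed c, so the two ends do not interfere.\<close>

definition left_vals :: "nat \<Rightarrow> nat set" where
  "left_vals t = mal_inj Z ` {1..t}"

definition right_vals :: "nat \<Rightarrow> nat set" where
  "right_vals t = (\<lambda>y. n + 1 - y) ` mal_inj Z' ` {1..t}"

definition free_vals :: "nat \<Rightarrow> nat set" where
  "free_vals t = {1..n} - left_vals t - right_vals t"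

lemma left_vals_bounds: "t \<le> m0 \<Longrightarrow> x \<in> left_vals t \<Longrightarrow> 1 \<le> x \<and> x \<le> c"
  unfolding left_vals_def using left_small mal_inj_ge_1 by auto

lemma right_vals_bounds: "t \<le> m0 \<Longrightarrow> x \<in> right_vals t \<Longrightarrow> c < x \<and> x \<le> n"
proof -
  assume t: "t \<le> m0" and x: "x \<in> right_vals t"
  then obtain j where j: "j \<in> {1..t}" "x = n + 1 - mal_inj Z' j" unfolding right_vals_def by auto
  have "mal_inj Z' j \<le> n - c" "1 \<le> mal_inj Z' j" using right_small[of j] mal_inj_ge_1[of j] j t by auto
  then show ?thesis using j c_le by auto
qed

lemma finite_free_vals: "finite (free_vals t)"
  unfolding free_vals_def by auto

lemma card_free_vals: "t \<le> m0 \<Longrightarrow> card (free_vals t) = n - 2 * t"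
proof -
  assume t: "t \<le> m0"
  have iL: "inj_on (mal_inj Z) {1..t}" and iR: "inj_on (mal_inj Z') {1..t}"
    by (auto intro: inj_on_subset[OF inj_on_mal_inj])
  have "mal_inj Z' ` {1..t} \<subseteq> {..n}" using right_small t by fastforce
  moreover have "inj_on (\<lambda>y. n + 1 - y) {..n}" by (auto simp: inj_on_def)
  ultimately have "inj_on (\<lambda>y. n + 1 - y) (mal_inj Z' ` {1..t})" by (rule inj_on_subset[rotated])
  then have cards: "card (left_vals t) = t" "card (right_vals t) = t"
    unfolding left_vals_def right_vals_def using iL iR by (simp_all add: card_image)
  have sub: "left_vals t \<subseteq> {1..n}" "right_vals t \<subseteq> {1..n}"
    using left_vals_bounds[OF t] right_vals_bounds[OF t] c_le by fastforce+
  have disj: "left_vals t \<inter> right_vals t = {}"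
    using left_vals_bounds[OF t] right_vals_bounds[OF t] by fastforce
  have "free_vals t = {1..n} - (left_vals t \<union> right_vals t)" unfolding free_vals_def by auto
  then have "card (free_vals t) = n - card (left_vals t \<union> right_vals t)"
    using sub by (simp add: card_Diff_subset finite_subset)
  also have "card (left_vals t \<union> right_vals t) = t + t"
    using disj cards sub by (subst card_Un_disjoint) (auto intro: finite_subset)
  finally show ?thesis by simp
qed

lemma free_vals_Suc:
  "free_vals (Suc t) = free_vals t - {mal_inj Z (Suc t)} - {n + 1 - mal_inj Z' (Suc t)}"
proof -
  have "{1..Suc t} = insert (Suc t) {1..t}" by auto
  then show ?thesis unfolding free_vals_def left_vals_def right_vals_def by auto
qed

lemma mal_inj_left_choice:
  assumes t: "t < m0"
  shows "mal_inj Z (Suc t) \<in> free_vals t" "card {y\<in>free_vals t. y < mal_inj Z (Suc t)} = Z t"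
proof -
  define U where "U = {1..} - left_vals t"
  define A where "A = mal_inj Z (Suc t)"
  have "A \<in> U" unfolding A_def U_def left_vals_def by (rule mal_inj_Suc_mem)
  moreover have "A \<le> c" unfolding A_def using left_small[of "Suc t"] t by auto
  moreover have right: "c < x" if "x \<in> right_vals t" for x using right_vals_bounds[of t] t that by simp
  ultimately show "A \<in> free_vals t" unfolding free_vals_def U_def using c_le by force
  have "{y\<in>free_vals t. y < A} = {y\<in>U. y < A}"
    unfolding free_vals_def U_def using \<open>A \<le> c\<close> c_le right by fastforce
  then show "card {y\<in>free_vals t. y < A} = Z t"
    using rank_in_mal_inj[of Z t] unfolding rank_in_def U_def A_def left_vals_def by simp
qed

lemma mal_inj_right_choice:
  assumes t: "t < m0"
  shows "n + 1 - mal_inj Z' (Suc t) \<in> free_vals t - {mal_inj Z (Suc t)}"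
    "card {y\<in>free_vals t - {mal_inj Z (Suc t)}. y > n + 1 - mal_inj Z' (Suc t)} = Z' t"
proof -
  define U' where "U' = {1..} - mal_inj Z' ` {1..t}"
  define B' where "B' = mal_inj Z' (Suc t)"
  define T1 where "T1 = free_vals t - {mal_inj Z (Suc t)}"
  have BU: "B' \<in> U'" unfolding B'_def U'_def by (rule mal_inj_Suc_mem)
  have Bc: "B' \<le> n - c" "1 \<le> B'" using right_small[of "Suc t"] t BU unfolding B'_def U'_def by auto
  have Ac: "mal_inj Z (Suc t) \<le> c" using left_small[of "Suc t"] t by auto
  have left: "x \<le> c" if "x \<in> left_vals t" for x using left_vals_bounds[of t] t that by simp
  have right_iff: "n + 1 - y \<in> right_vals t \<longleftrightarrow> y \<in> mal_inj Z' ` {1..t}" if "1 \<le> y" "y \<le> n" for y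
  proof
    assume "n + 1 - y \<in> right_vals t"
    then obtain j where j: "j \<in> {1..t}" "n + 1 - y = n + 1 - mal_inj Z' j" unfolding right_vals_def by auto
    have "mal_inj Z' j \<le> n - c" "1 \<le> mal_inj Z' j" using right_small[of j] mal_inj_ge_1[of j] j t by auto
    then have "y = mal_inj Z' j" using j that by linarith
    then show "y \<in> mal_inj Z' ` {1..t}" using j by auto
  qed (auto simp: right_vals_def)
  show "n + 1 - B' \<in> T1"
    unfolding T1_def free_vals_def using Bc Ac left[of "n + 1 - B'"] right_iff[of B'] BU c_le
    unfolding U'_def by auto
  have "{y\<in>T1. y > n + 1 - B'} = (\<lambda>y'. n + 1 - y') ` {y'\<in>U'. y' < B'}"
  proof (intro equalityI subsetI)
    fix y assume y: "y \<in> {y\<in>T1. y > n + 1 - B'}"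
    then have y1: "1 \<le> y" "y \<le> n" "y \<notin> right_vals t" unfolding T1_def free_vals_def by auto
    have "n + 1 - y \<notin> mal_inj Z' ` {1..t}" using right_iff[of "n + 1 - y"] y1 by auto
    moreover have "n + 1 - y < B'" using y y1 Bc by auto
    ultimately have "n + 1 - y \<in> {y'\<in>U'. y' < B'}" unfolding U'_def using y1 by auto
    moreover have "y = n + 1 - (n + 1 - y)" using y1 by auto
    ultimately show "y \<in> (\<lambda>y'. n + 1 - y') ` {y'\<in>U'. y' < B'}" by blast
  next
    fix y assume "y \<in> (\<lambda>y'. n + 1 - y') ` {y'\<in>U'. y' < B'}"
    then obtain y' where y': "y = n + 1 - y'" "y' \<in> U'" "y' < B'" by auto
    have y'1: "1 \<le> y'" "y' \<le> n" "y' \<notin> mal_inj Z' ` {1..t}" using y' Bc c_le unfolding U'_def by auto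
    have "y \<notin> right_vals t" using right_iff[OF y'1(1,2)] y'1(3) y'(1) y'1(2) by auto
    moreover have "c < y" using y' Bc c_le by auto
    ultimately show "y \<in> {y\<in>T1. y > n + 1 - B'}"
      unfolding T1_def free_vals_def using y' y'1 Ac left by fastforce
  qed
  moreover have "inj_on (\<lambda>y'. n + 1 - y') {y'\<in>U'. y' < B'}"
    using Bc c_le by (auto simp: inj_on_def)
  ultimately show "card {y\<in>T1. y > n + 1 - B'} = Z' t"
    using rank_in_mal_inj[of Z' t] unfolding rank_in_def U'_def B'_def by (simp add: card_image)
qed

lemma inward_fill_free_vals_Suc:
  assumes t: "t < m0"
  shows "inward_fill Z Z' t (n - 2 * t) (free_vals t) =
    (inward_fill Z Z' (Suc t) (n - 2 * Suc t) (free_vals (Suc t)))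
      (Suc t := mal_inj Z (Suc t), n - t := n + 1 - mal_inj Z' (Suc t))"
proof -
  define m where "m = n - 2 * Suc t"
  have m: "n - 2 * t = Suc (Suc m)" "Suc t + Suc m = n - t" unfolding m_def using t m0_le by auto
  define T where "T = free_vals t"
  define l where "l = enumerate T (Z t mod Suc (Suc m))"
  define r where "r = enumerate (T - {l}) (m - Z' t mod Suc m)"
  have fin: "finite T" "finite (T - {l})" unfolding T_def by (simp_all add: finite_free_vals)
  have card_T: "card T = Suc (Suc m)" unfolding T_def using card_free_vals[of t] t m by simp
  have l: "l = mal_inj Z (Suc t)"
  proof -
    have "{y\<in>T. y < mal_inj Z (Suc t)} \<subset> T" using mal_inj_left_choice(1)[OF t] unfolding T_def by auto
    then have "card {y\<in>T. y < mal_inj Z (Suc t)} < card T" by (rule psubset_card_mono[OF fin(1)])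
    then have "Z t < card T" using mal_inj_left_choice(2)[OF t] unfolding T_def by simp
    then show ?thesis
      unfolding l_def using card_T mal_inj_left_choice[OF t] enumerate_eq_iff_card_less[OF fin(1)]
      unfolding T_def by simp
  qed
  have r: "r = n + 1 - mal_inj Z' (Suc t)"
  proof -
    define B where "B = n + 1 - mal_inj Z' (Suc t)"
    have B: "B \<in> T - {l}" "card {y\<in>T - {l}. y > B} = Z' t"
      unfolding B_def l T_def using mal_inj_right_choice[OF t] by auto
    have card_T1: "card (T - {l}) = Suc m"
      using card_T mal_inj_left_choice(1)[OF t] fin(1) unfolding l T_def by simp
    have "Z' t < Suc m"
      using card_less_plus_card_greater[OF fin(2) B(1)] B(2) card_T1 by simp
    then show ?thesis
      using enumerate_eq_iff_card_greater[OF fin(2) B(1), of "Z' t"] B(2) card_T1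
      unfolding r_def B_def by simp
  qed
  have "T - {l} - {r} = free_vals (Suc t)" unfolding T_def l r free_vals_Suc ..
  then show ?thesis
    using inward_fill_Suc_Suc[where Z=Z and Z'=Z' and t=t, OF l_def r_def]
    unfolding m(1) m(2)[symmetric] m_def[symmetric] T_def[symmetric] l[symmetric] r[symmetric]
    by simp
qed

lemma inward_fill_free_vals:
  assumes "t \<le> m0"
  shows "(t < i \<and> i \<le> m0 \<longrightarrow> inward_fill Z Z' t (n - 2 * t) (free_vals t) i = mal_inj Z i) \<and>
   (n + 1 - m0 \<le> i \<and> i \<le> n - t \<longrightarrow>
      inward_fill Z Z' t (n - 2 * t) (free_vals t) i = n + 1 - mal_inj Z' (n + 1 - i))"
  using assms
proof (induction "m0 - t" arbitrary: t)
  case 0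
  then show ?case using m0_le by auto
next
  case (Suc d)
  then have t: "t < m0" by simp
  have IH: "(Suc t < i \<and> i \<le> m0 \<longrightarrow>
        inward_fill Z Z' (Suc t) (n - 2 * Suc t) (free_vals (Suc t)) i = mal_inj Z i) \<and>
      (n + 1 - m0 \<le> i \<and> i \<le> n - Suc t \<longrightarrow>
        inward_fill Z Z' (Suc t) (n - 2 * Suc t) (free_vals (Suc t)) i = n + 1 - mal_inj Z' (n + 1 - i))"
    using Suc.hyps(1)[of "Suc t"] Suc.hyps(2) t by simp
  have "Suc t \<noteq> n - t" "n + 1 - (n - t) = Suc t" using t m0_le by auto
  then show ?case using IH t m0_le unfolding inward_fill_free_vals_Suc[OF t] by auto
qed

lemma inward_fill_agrees_mal_inj:
  "1 \<le> i \<Longrightarrow> i \<le> m0 \<Longrightarrow> inward_fill Z Z' 0 n {1..n} i = mal_inj Z i"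
  "n + 1 - m0 \<le> i \<Longrightarrow> i \<le> n \<Longrightarrow> inward_fill Z Z' 0 n {1..n} i = n + 1 - mal_inj Z' (n + 1 - i)"
proof -
  have "free_vals 0 = {1..n}" unfolding free_vals_def left_vals_def right_vals_def by simp
  then show "1 \<le> i \<Longrightarrow> i \<le> m0 \<Longrightarrow> inward_fill Z Z' 0 n {1..n} i = mal_inj Z i"
    "n + 1 - m0 \<le> i \<Longrightarrow> i \<le> n \<Longrightarrow> inward_fill Z Z' 0 n {1..n} i = n + 1 - mal_inj Z' (n + 1 - i)"
    using inward_fill_free_vals[of 0 i] by auto
qed

end

section \<open>The law of the two-sided filling\<close>

abbreviation geom :: "real \<Rightarrow> nat measure" where
  "geom q \<equiv> measure_pmf (geometric_pmf (1 - q))"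

abbreviation geom_seqs :: "real \<Rightarrow> (nat \<Rightarrow> nat) measure" where
  "geom_seqs q \<equiv> PiM UNIV (\<lambda>_. geom q)"

lemma space_geom_seqs [simp]: "space (geom_seqs q) = UNIV"
  by (simp add: space_PiM)

lemma prob_space_geom_seqs: "prob_space (geom_seqs q)"
  by (rule prob_space_PiM) (simp add: prob_space_measure_pmf)

lemma emeasure_geom_sums:
  assumes q: "0 < q" "q < 1" and s: "(\<lambda>i. (1 - q) * q ^ i * indicator A i) sums s"
  shows "emeasure (geom q) A = ennreal s"
proof -
  have pmf: "pmf (geometric_pmf (1 - q)) i = (1 - q) * q ^ i" for i
    using q by (simp add: mult.commute)
  have "emeasure (geom q) A = (\<integral>\<^sup>+ x. ennreal (pmf (geometric_pmf (1 - q)) x) \<partial>count_space A)"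
    by (simp add: nn_integral_pmf)
  also have "\<dots> = (\<integral>\<^sup>+ x. ennreal (pmf (geometric_pmf (1 - q)) x) * indicator A x \<partial>count_space UNIV)"
    by (simp add: nn_integral_count_space_indicator)
  also have "\<dots> = (\<Sum>i. ennreal (pmf (geometric_pmf (1 - q)) i) * indicator A i)"
    by (simp add: nn_integral_count_space_nat)
  also have "\<dots> = (\<Sum>i. ennreal ((1 - q) * q ^ i * indicator A i))"
    by (intro arg_cong[where f=suminf] ext) (simp add: pmf indicator_def)
  also have "\<dots> = ennreal s"
    by (rule suminf_ennreal_eq[OF _ s]) (use q in \<open>auto simp: indicator_def\<close>)
  finally show ?thesis .
qed

lemma emeasure_geom_progression:
  assumes q: "0 < q" "q < 1" and M: "0 < M"
  shows "emeasure (geom q) (range (\<lambda>t. c + M * t)) = ennreal ((1 - q) * q ^ c / (1 - q ^ M))"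
proof (rule emeasure_geom_sums[OF q])
  define g where "g t = c + M * t" for t
  have "strict_mono g" unfolding g_def using M by (auto simp: strict_mono_def)
  have "norm (q ^ M) < 1" using q M by (simp add: power_less_one_iff abs_of_nonneg)
  from sums_mult[OF geometric_sums[OF this], of "(1 - q) * q ^ c"]
  have "(\<lambda>t. (1 - q) * q ^ c * (q ^ M) ^ t) sums ((1 - q) * q ^ c / (1 - q ^ M))" by simp
  moreover have "(\<lambda>t. (1 - q) * q ^ (g t) * indicator (range g) (g t)) = (\<lambda>t. (1 - q) * q ^ c * (q ^ M) ^ t)"
  proof
    fix t
    have "indicator (range g) (g t) = (1::real)" by simp
    then show "(1 - q) * q ^ (g t) * indicator (range g) (g t) = (1 - q) * q ^ c * (q ^ M) ^ t"
      by (simp add: g_def power_add power_mult)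
  qed
  ultimately have "(\<lambda>t. (1 - q) * q ^ (g t) * indicator (range g) (g t)) sums ((1 - q) * q ^ c / (1 - q ^ M))"
    by simp
  then show "(\<lambda>i. (1 - q) * q ^ i * indicator (range (\<lambda>t. c + M * t)) i) sums ((1 - q) * q ^ c / (1 - q ^ M))"
    unfolding g_def[abs_def, symmetric]
    by (subst sums_mono_reindex[OF \<open>strict_mono g\<close>, symmetric]) (auto simp: indicator_def)
qed

lemma emeasure_geom_mod_eq:
  assumes "0 < q" "q < 1" "c < M"
  shows "emeasure (geom q) {z. z mod M = c} = ennreal ((1 - q) * q ^ c / (1 - q ^ M))"
proof -
  have "{z. z mod M = c} = range (\<lambda>t. c + M * t)"
    using assms(3) by (auto simp: image_iff) (metis add.commute mod_mult_div_eq)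
  then show ?thesis using emeasure_geom_progression[OF assms(1,2), of M c] assms(3) by simp
qed

lemma emeasure_geom_atLeast:
  assumes "0 < q" "q < 1"
  shows "emeasure (geom q) {v..} = ennreal (q ^ v)"
proof -
  have "{v..} = range (\<lambda>t. v + 1 * t)" by (auto simp: image_iff) (metis le_add_diff_inverse)
  then show ?thesis using emeasure_geom_progression[OF assms, of 1 v] assms by simp
qed

lemma geom_seqs_cylinder:
  assumes "finite J"
  shows "{Z. \<forall>s\<in>J. Z s \<in> A s} \<in> sets (geom_seqs q)"
    and "emeasure (geom_seqs q) {Z. \<forall>s\<in>J. Z s \<in> A s} = (\<Prod>s\<in>J. emeasure (geom q) (A s))"
proof -
  have eq: "{Z. \<forall>s\<in>J. Z s \<in> A s} = prod_emb UNIV (\<lambda>_. geom q) J (PiE J A)"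
    by (auto simp: prod_emb_def space_PiM)
  show "{Z. \<forall>s\<in>J. Z s \<in> A s} \<in> sets (geom_seqs q)"
    unfolding eq using assms by (intro sets_PiM_I) auto
  show "emeasure (geom_seqs q) {Z. \<forall>s\<in>J. Z s \<in> A s} = (\<Prod>s\<in>J. emeasure (geom q) (A s))"
    unfolding eq using assms by (subst emeasure_PiM_emb) (auto simp: prob_space_measure_pmf)
qed

lemma emeasure_geom_seqs_mod_cylinder:
  assumes q: "0 < q" "q < 1" and c: "\<And>s. s < N \<Longrightarrow> c s < M s"
  shows "emeasure (geom_seqs q) {Z. \<forall>s\<in>{..<N}. Z s \<in> {z. z mod M s = c s}} =
    ennreal (\<Prod>s<N. (1 - q) * q ^ c s / (1 - q ^ M s))"
proof -
  have "(\<Prod>s<N. emeasure (geom q) {z. z mod M s = c s}) = (\<Prod>s<N. ennreal ((1 - q) * q ^ c s / (1 - q ^ M s)))"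
    using emeasure_geom_mod_eq[OF q c] by simp
  also have "\<dots> = ennreal (\<Prod>s<N. (1 - q) * q ^ c s / (1 - q ^ M s))"
  proof (rule prod_ennreal)
    fix s assume "s \<in> {..<N}"
    then have "q ^ M s < 1" using q c[of s] by (simp add: power_less_one_iff)
    then show "0 \<le> (1 - q) * q ^ c s / (1 - q ^ M s)" using q by simp
  qed
  finally show ?thesis using geom_seqs_cylinder(2)[where J="{..<N}" and A="\<lambda>s. {z. z mod M s = c s}" and q=q] by simp
qed

lemma measurable_prefix: "(\<lambda>Z. map Z [0..<k]) \<in> geom_seqs q \<rightarrow>\<^sub>M count_space UNIV"
proof (induction k)
  case (Suc k)
  have "(\<lambda>Z. Z k) \<in> geom_seqs q \<rightarrow>\<^sub>M count_space UNIV"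
    by (subst measurable_cong_sets[OF refl, of _ "geom q"]) (auto intro: measurable_component_singleton)
  with Suc have "(\<lambda>Z. (map Z [0..<k], Z k)) \<in> geom_seqs q \<rightarrow>\<^sub>M count_space UNIV"
    using measurable_Pair by (fastforce simp: pair_measure_countable)
  from measurable_comp[OF this, of "\<lambda>(l, x). l @ [x]" "count_space UNIV"] show ?case
    by (simp add: comp_def)
qed simp

lemma measurable_finite_dependence:
  fixes F :: "(nat \<Rightarrow> nat) \<Rightarrow> 'b::countable"
  assumes "\<And>Z Y. (\<forall>s<k. Z s = Y s) \<Longrightarrow> F Z = F Y"
  shows "F \<in> geom_seqs q \<rightarrow>\<^sub>M count_space UNIV"
proof -
  define F' where "F' l = F (\<lambda>s. if s < length l then l ! s else 0)" for l :: "nat list"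
  have "F = (\<lambda>Z. F' (map Z [0..<k]))"
    unfolding F'_def by (rule ext, rule assms) auto
  then show ?thesis using measurable_comp[OF measurable_prefix, of F'] by (simp add: comp_def)
qed

lemma measurable_finite_dependence_pair:
  fixes F :: "(nat \<Rightarrow> nat) \<times> (nat \<Rightarrow> nat) \<Rightarrow> 'b::countable"
  assumes "\<And>Z Y Z' Y'. (\<forall>s<k. Z s = Y s \<and> Z' s = Y' s) \<Longrightarrow> F (Z, Z') = F (Y, Y')"
  shows "F \<in> geom_seqs q \<Otimes>\<^sub>M geom_seqs q \<rightarrow>\<^sub>M count_space UNIV"
proof -
  define pad where "pad l = (\<lambda>s. if s < length l then l ! s else 0)" for l :: "nat list"
  define F' where "F' p = F (pad (fst p), pad (snd p))" for p :: "nat list \<times> nat list"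
  have "F = (\<lambda>\<omega>. F' (map (fst \<omega>) [0..<k], map (snd \<omega>) [0..<k]))"
    unfolding F'_def pad_def by (rule ext, case_tac \<omega>, simp, rule assms) auto
  moreover have "(\<lambda>\<omega>. (map (fst \<omega>) [0..<k], map (snd \<omega>) [0..<k]))
      \<in> geom_seqs q \<Otimes>\<^sub>M geom_seqs q \<rightarrow>\<^sub>M count_space UNIV"
    using measurable_Pair[OF measurable_comp[OF measurable_fst measurable_prefix]
        measurable_comp[OF measurable_snd measurable_prefix]]
    by (simp add: comp_def pair_measure_countable)
  moreover have "F' \<in> count_space UNIV \<rightarrow>\<^sub>M count_space UNIV" by simp
  ultimately show ?thesis using measurable_comp[OF _ \<open>F' \<in> _\<close>] by (simp add: comp_def)
qed

lemma mal_list_cong: "(\<forall>s<k. Z s = Y s) \<Longrightarrow> mal_list Z k = mal_list Y k"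
  by (induction k) auto

lemma measurable_mal_inj: "mal_inj \<in> geom_seqs q \<rightarrow>\<^sub>M NN"
proof -
  have "(\<lambda>Z. mal_inj Z i) \<in> geom_seqs q \<rightarrow>\<^sub>M count_space UNIV" for i
  proof (rule measurable_finite_dependence[of i])
    fix Z Y :: "nat \<Rightarrow> nat" assume "\<forall>s<i. Z s = Y s"
    then show "mal_inj Z i = mal_inj Y i" by (simp add: mal_inj_def mal_list_cong[of i Z Y])
  qed
  then show ?thesis by (intro measurable_PiM_single') auto
qed

lemma inward_fill_cong:
  "\<forall>s<t + m. Z s = Y s \<and> Z' s = Y' s \<Longrightarrow> inward_fill Z Z' t m T = inward_fill Y Y' t m T"
proof (induction m arbitrary: t T rule: nat_induct2)
  case (step m)
  then have "Z t = Y t" "Z' t = Y' t" "inward_fill Z Z' (Suc t) m T' = inward_fill Y Y' (Suc t) m T'" for T'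
    by auto
  then show ?case by (simp add: inward_fill.simps(3) Let_def)
qed simp_all

definition mallows_fill :: "nat \<Rightarrow> (nat \<Rightarrow> nat) \<times> (nat \<Rightarrow> nat) \<Rightarrow> nat \<Rightarrow> nat" where
  "mallows_fill n \<omega> i = (if i \<in> {1..n} then inward_fill (fst \<omega>) (snd \<omega>) 0 n {1..n} i else i)"

lemma measurable_mallows_fill: "mallows_fill n \<in> geom_seqs q \<Otimes>\<^sub>M geom_seqs q \<rightarrow>\<^sub>M NN"
proof -
  have "(\<lambda>\<omega>. mallows_fill n \<omega> i) \<in> geom_seqs q \<Otimes>\<^sub>M geom_seqs q \<rightarrow>\<^sub>M count_space UNIV" for i
  proof (rule measurable_finite_dependence_pair[of n])
    fix Z Y Z' Y' :: "nat \<Rightarrow> nat" assume "\<forall>s<n. Z s = Y s \<and> Z' s = Y' s"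
    then show "mallows_fill n (Z, Z') i = mallows_fill n (Y, Y') i"
      using inward_fill_cong[of 0 n Z Y Z' Y'] by (simp add: mallows_fill_def)
  qed
  then show ?thesis by (intro measurable_PiM_single') auto
qed

lemma mallows_fill_permutes: "mallows_fill n \<omega> permutes {1..n}"
proof -
  have "bij_betw (inward_fill (fst \<omega>) (snd \<omega>) 0 n {1..n}) {1..n} {1..n}"
    using bij_betw_inward_fill[of "{1..n}" n "fst \<omega>" "snd \<omega>" 0] by simp
  then have "bij_betw (mallows_fill n \<omega>) {1..n} {1..n}"
    by (rule bij_betw_cong[THEN iffD1, rotated]) (simp add: mallows_fill_def)
  then show ?thesis by (rule bij_imp_permutes) (auto simp: mallows_fill_def)
qed

definition left_cylinder :: "nat \<Rightarrow> (nat \<Rightarrow> nat) \<Rightarrow> (nat \<Rightarrow> nat) set" where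
  "left_cylinder n \<sigma> = {Z. \<forall>s\<in>{..<(n+1) div 2}. Z s \<in> {z. z mod (n - 2 * s) = left_code \<sigma> s (n - 2 * s)}}"

definition right_cylinder :: "nat \<Rightarrow> (nat \<Rightarrow> nat) \<Rightarrow> (nat \<Rightarrow> nat) set" where
  "right_cylinder n \<sigma> = {Z. \<forall>s\<in>{..<n div 2}. Z s \<in> {z. z mod (n - 2 * s - 1) = right_code \<sigma> s (n - 2 * s)}}"

lemma mallows_fill_eq_iff:
  assumes "\<sigma> permutes {1..n}"
  shows "mallows_fill n \<omega> = \<sigma> \<longleftrightarrow> fst \<omega> \<in> left_cylinder n \<sigma> \<and> snd \<omega> \<in> right_cylinder n \<sigma>"
proof -
  have "mallows_fill n \<omega> = \<sigma> \<longleftrightarrow> (\<forall>i\<in>{Suc 0..0+n}. inward_fill (fst \<omega>) (snd \<omega>) 0 n {1..n} i = \<sigma> i)"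
    using permutes_not_in[OF assms] by (auto simp: mallows_fill_def fun_eq_iff)
  also have "\<dots> \<longleftrightarrow> codes_match (fst \<omega>) (snd \<omega>) \<sigma> 0 n"
    by (rule inward_fill_eq_iff_codes_match) (use permutes_imp_bij[OF assms] in simp)
  finally show ?thesis by (simp add: codes_match_def left_cylinder_def right_cylinder_def Ball_def)
qed

lemma mallows_fill_vimage_singleton:
  assumes "\<sigma> permutes {1..n}"
  shows "mallows_fill n -` {\<sigma>} = left_cylinder n \<sigma> \<times> right_cylinder n \<sigma>"
  using mallows_fill_eq_iff[OF assms] by fastforce

lemma sets_mallows_fill_vimage_singleton:
  assumes "\<sigma> permutes {1..n}"
  shows "mallows_fill n -` {\<sigma>} \<in> sets (geom_seqs q \<Otimes>\<^sub>M geom_seqs q)"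
proof -
  have "left_cylinder n \<sigma> \<in> sets (geom_seqs q)" "right_cylinder n \<sigma> \<in> sets (geom_seqs q)"
    unfolding left_cylinder_def right_cylinder_def by (rule geom_seqs_cylinder(1), simp)+
  then show ?thesis unfolding mallows_fill_vimage_singleton[OF assms] by simp
qed

definition mallows_const :: "real \<Rightarrow> nat \<Rightarrow> real" where
  "mallows_const q n = (\<Prod>s<(n+1) div 2. (1 - q) / (1 - q ^ (n - 2 * s))) *
     (\<Prod>s<n div 2. (1 - q) / (1 - q ^ (n - 2 * s - 1)))"

lemma emeasure_mallows_fill_singleton:
  assumes q: "0 < q" "q < 1" and \<sigma>: "\<sigma> permutes {1..n}"
  shows "emeasure (geom_seqs q \<Otimes>\<^sub>M geom_seqs q) (mallows_fill n -` {\<sigma>}) =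
    ennreal (mallows_const q n * q ^ inv_count n \<sigma>)"
proof -
  interpret P: prob_space "geom_seqs q" by (rule prob_space_geom_seqs)
  have left: "emeasure (geom_seqs q) (left_cylinder n \<sigma>) =
      ennreal (\<Prod>s<(n+1) div 2. (1 - q) * q ^ left_code \<sigma> s (n - 2 * s) / (1 - q ^ (n - 2 * s)))"
    unfolding left_cylinder_def
    by (rule emeasure_geom_seqs_mod_cylinder[OF q], rule left_code_less) presburger
  have right: "emeasure (geom_seqs q) (right_cylinder n \<sigma>) =
      ennreal (\<Prod>s<n div 2. (1 - q) * q ^ right_code \<sigma> s (n - 2 * s) / (1 - q ^ (n - 2 * s - 1)))"
    unfolding right_cylinder_def
    by (rule emeasure_geom_seqs_mod_cylinder[OF q], rule right_code_less) presburger
  have inv: "inv_count n \<sigma> = (\<Sum>s<(n+1) div 2. left_code \<sigma> s (n - 2 * s)) + (\<Sum>s<n div 2. right_code \<sigma> s (n - 2 * s))"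
    using inv_count_eq_inversions_on[of n \<sigma>] inversions_on_eq_sum_codes[of \<sigma> 0 n] by simp
  have "left_cylinder n \<sigma> \<in> sets (geom_seqs q)" "right_cylinder n \<sigma> \<in> sets (geom_seqs q)"
    unfolding left_cylinder_def right_cylinder_def by (rule geom_seqs_cylinder(1), simp)+
  then have "emeasure (geom_seqs q \<Otimes>\<^sub>M geom_seqs q) (mallows_fill n -` {\<sigma>}) =
      emeasure (geom_seqs q) (left_cylinder n \<sigma>) * emeasure (geom_seqs q) (right_cylinder n \<sigma>)"
    unfolding mallows_fill_vimage_singleton[OF \<sigma>] by (simp add: P.emeasure_pair_measure_Times)
  also have "\<dots> = ennreal ((\<Prod>s<(n+1) div 2. (1 - q) * q ^ left_code \<sigma> s (n - 2 * s) / (1 - q ^ (n - 2 * s))) *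
      (\<Prod>s<n div 2. (1 - q) * q ^ right_code \<sigma> s (n - 2 * s) / (1 - q ^ (n - 2 * s - 1))))"
    unfolding left right
    by (rule ennreal_mult''[symmetric]) (auto intro!: prod_nonneg simp: q power_le_one less_imp_le)
  also have split: "(1 - q) * q ^ k / (1 - q ^ M) = (1 - q) / (1 - q ^ M) * q ^ k" for k M :: nat
    by simp
  have "(\<Prod>s<(n+1) div 2. (1 - q) * q ^ left_code \<sigma> s (n - 2 * s) / (1 - q ^ (n - 2 * s))) *
      (\<Prod>s<n div 2. (1 - q) * q ^ right_code \<sigma> s (n - 2 * s) / (1 - q ^ (n - 2 * s - 1))) =
      mallows_const q n * q ^ inv_count n \<sigma>"
    unfolding inv mallows_const_def power_add power_sum split prod.distrib by (simp add: mult_ac)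
  finally show ?thesis .
qed

lemma sum_mallows_weights_pos:
  fixes q :: real
  assumes "0 < q"
  shows "0 < (\<Sum>\<sigma>\<in>{\<sigma>. \<sigma> permutes {1..n}}. q ^ inv_count n \<sigma>)"
proof -
  have "finite {\<sigma>. \<sigma> permutes {1..n}}" by (rule finite_permutations) simp
  moreover have "id \<in> {\<sigma>. \<sigma> permutes {1..n}}" by (simp add: permutes_id)
  ultimately show ?thesis by (rule sum_pos2[where i=id]) (use assms in auto)
qed

lemma mallows_weight_nonneg: "0 < q \<Longrightarrow> 0 \<le> mallows_weight n q \<sigma>"
  using sum_mallows_weights_pos[of q n] by (simp add: mallows_weight_def)

lemma pmf_mallows:
  assumes "0 < q"
  shows "pmf (mallows n q) = mallows_weight n q"
proof -
  define P where "P = {\<sigma>. \<sigma> permutes {1..n}}"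
  have fin: "finite P" unfolding P_def by (rule finite_permutations) simp
  note nonneg = mallows_weight_nonneg[OF assms, of n]
  have "(\<Sum>\<sigma>\<in>P. mallows_weight n q \<sigma>) = 1"
    using sum_mallows_weights_pos[OF assms, of n]
    by (simp add: mallows_weight_def P_def sum_divide_distrib[symmetric])
  moreover have "(\<integral>\<^sup>+ \<sigma>. ennreal (mallows_weight n q \<sigma>) \<partial>count_space UNIV) = (\<Sum>\<sigma>\<in>P. ennreal (mallows_weight n q \<sigma>))"
    by (rule nn_integral_count_space'[OF fin]) (auto simp: mallows_weight_def P_def)
  ultimately have "(\<integral>\<^sup>+ \<sigma>. ennreal (mallows_weight n q \<sigma>) \<partial>count_space UNIV) = 1"
    using nonneg by (simp add: sum_ennreal)
  then show ?thesis unfolding mallows_def using nonneg by (simp add: pmf_embed_pmf fun_eq_iff)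
qed

lemma emeasure_distr_mallows_fill:
  assumes q: "0 < q" "q < 1" and A: "A \<in> sets NN"
  shows "emeasure (distr (geom_seqs q \<Otimes>\<^sub>M geom_seqs q) NN (mallows_fill n)) A =
     (\<Sum>\<sigma>\<in>A \<inter> {\<sigma>. \<sigma> permutes {1..n}}. ennreal (mallows_const q n * q ^ inv_count n \<sigma>))"
proof -
  define P where "P = {\<sigma>. \<sigma> permutes {1..n}}"
  have "mallows_fill n -` A = (\<Union>\<sigma>\<in>A \<inter> P. mallows_fill n -` {\<sigma>})"
    unfolding P_def using mallows_fill_permutes by auto
  moreover have "emeasure (geom_seqs q \<Otimes>\<^sub>M geom_seqs q) (\<Union>\<sigma>\<in>A \<inter> P. mallows_fill n -` {\<sigma>}) =
      (\<Sum>\<sigma>\<in>A \<inter> P. emeasure (geom_seqs q \<Otimes>\<^sub>M geom_seqs q) (mallows_fill n -` {\<sigma>}))"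
  proof (rule sum_emeasure[symmetric])
    show "finite (A \<inter> P)" unfolding P_def by (rule finite_Int[OF disjI2], rule finite_permutations) simp
    show "(\<lambda>\<sigma>. mallows_fill n -` {\<sigma>}) ` (A \<inter> P) \<subseteq> sets (geom_seqs q \<Otimes>\<^sub>M geom_seqs q)"
      using sets_mallows_fill_vimage_singleton unfolding P_def by auto
  qed (auto simp: disjoint_family_on_def)
  ultimately show ?thesis
    using emeasure_distr[OF measurable_mallows_fill A] emeasure_mallows_fill_singleton[OF q]
    by (simp add: P_def space_pair_measure)
qed

lemma mallows_const_eq:
  assumes q: "0 < q" "q < 1"
  shows "mallows_const q n = 1 / (\<Sum>\<sigma>\<in>{\<sigma>. \<sigma> permutes {1..n}}. q ^ inv_count n \<sigma>)"
proof -
  define P where "P = {\<sigma>. \<sigma> permutes {1..n}}"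
  interpret prob_space "distr (geom_seqs q \<Otimes>\<^sub>M geom_seqs q) NN (mallows_fill n)"
    by (intro prob_space.prob_space_distr prob_space_pair prob_space_geom_seqs measurable_mallows_fill)
  have nonneg: "0 \<le> mallows_const q n"
    using q by (auto intro!: prod_nonneg mult_nonneg_nonneg divide_nonneg_nonneg
        simp: mallows_const_def power_le_one less_imp_le)
  have "UNIV \<in> sets NN" using sets.top[of NN] by (simp add: space_PiM)
  have "1 = emeasure (distr (geom_seqs q \<Otimes>\<^sub>M geom_seqs q) NN (mallows_fill n)) UNIV"
    using emeasure_space_1 by (simp add: space_PiM)
  also have "\<dots> = ennreal (\<Sum>\<sigma>\<in>P. mallows_const q n * q ^ inv_count n \<sigma>)"
    using emeasure_distr_mallows_fill[OF q \<open>UNIV \<in> sets NN\<close>, of n] nonneg q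
    by (simp add: P_def sum_ennreal)
  finally have "mallows_const q n * (\<Sum>\<sigma>\<in>P. q ^ inv_count n \<sigma>) = 1"
    using nonneg q by (simp add: sum_distrib_left sum_nonneg)
  then show ?thesis using sum_mallows_weights_pos[OF q(1), of n] unfolding P_def by (simp add: field_simps)
qed

theorem distr_mallows_fill:
  assumes q: "0 < q" "q < 1"
  shows "distr (geom_seqs q \<Otimes>\<^sub>M geom_seqs q) NN (mallows_fill n) = distr (measure_pmf (mallows n q)) NN id"
proof (rule measure_eqI)
  fix A assume "A \<in> sets (distr (geom_seqs q \<Otimes>\<^sub>M geom_seqs q) NN (mallows_fill n))"
  then have A: "A \<in> sets NN" by simp
  define P where "P = {\<sigma>. \<sigma> permutes {1..n}}"
  have "finite P" unfolding P_def by (rule finite_permutations) simp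
  have "set_pmf (mallows n q) \<subseteq> P"
    using pmf_mallows[OF q(1)] by (auto simp: set_pmf_eq mallows_weight_def P_def)
  then have "emeasure (measure_pmf (mallows n q)) A = emeasure (measure_pmf (mallows n q)) (A \<inter> P)"
    by (metis emeasure_Int_set_pmf inf.absorb_iff2 inf_assoc)
  also have "\<dots> = (\<Sum>\<sigma>\<in>A \<inter> P. ennreal (mallows_weight n q \<sigma>))"
    using \<open>finite P\<close> mallows_weight_nonneg[OF q(1)]
    by (simp add: emeasure_measure_pmf_finite pmf_mallows[OF q(1)] sum_ennreal)
  also have "\<dots> = (\<Sum>\<sigma>\<in>A \<inter> P. ennreal (mallows_const q n * q ^ inv_count n \<sigma>))"
    by (intro sum.cong refl) (simp add: mallows_weight_def mallows_const_eq[OF q] P_def)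
  finally show "emeasure (distr (geom_seqs q \<Otimes>\<^sub>M geom_seqs q) NN (mallows_fill n)) A =
      emeasure (distr (measure_pmf (mallows n q)) NN id) A"
    using emeasure_distr_mallows_fill[OF q A] emeasure_distr[of id _ NN A] A
    by (simp add: P_def measurable_pmf_measure1 space_PiM)
qed simp

section \<open>The coupling\<close>

definition coupling_map ::
    "nat \<Rightarrow> (nat \<Rightarrow> nat) \<times> (nat \<Rightarrow> nat) \<Rightarrow> (nat \<Rightarrow> nat) \<times> (nat \<Rightarrow> nat) \<times> (nat \<Rightarrow> nat)" where
  "coupling_map n \<omega> = (mallows_fill n \<omega>, mal_inj (fst \<omega>), mal_inj (snd \<omega>))"

lemma measurable_coupling_map:
  "coupling_map n \<in> geom_seqs q \<Otimes>\<^sub>M geom_seqs q \<rightarrow>\<^sub>M NN \<Otimes>\<^sub>M NN \<Otimes>\<^sub>M NN"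
  unfolding coupling_map_def[abs_def]
  by (intro measurable_Pair measurable_mallows_fill
      measurable_comp[OF measurable_fst measurable_mal_inj, unfolded comp_def]
      measurable_comp[OF measurable_snd measurable_mal_inj, unfolded comp_def])

lemma distr_coupling_map_fst:
  assumes "0 < q" "q < 1"
  shows "distr (distr (geom_seqs q \<Otimes>\<^sub>M geom_seqs q) (NN \<Otimes>\<^sub>M NN \<Otimes>\<^sub>M NN) (coupling_map n)) NN fst =
    distr (measure_pmf (mallows n q)) NN id"
proof -
  have "fst \<circ> coupling_map n = mallows_fill n" by (simp add: coupling_map_def comp_def)
  then show ?thesis
    using distr_distr[OF measurable_fst measurable_coupling_map] distr_mallows_fill[OF assms] by simp
qed

lemma distr_coupling_map_snd:
  "distr (distr (geom_seqs q \<Otimes>\<^sub>M geom_seqs q) (NN \<Otimes>\<^sub>M NN \<Otimes>\<^sub>M NN) (coupling_map n)) (NN \<Otimes>\<^sub>M NN) snd =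
    mallows_N q \<Otimes>\<^sub>M mallows_N q"
proof -
  interpret P: prob_space "geom_seqs q" by (rule prob_space_geom_seqs)
  have "snd \<circ> coupling_map n = (\<lambda>(x, y). (mal_inj x, mal_inj y))" by (auto simp: coupling_map_def)
  moreover have "sigma_finite_measure (distr (geom_seqs q) NN mal_inj)"
    by (rule prob_space_imp_sigma_finite, rule P.prob_space_distr[OF measurable_mal_inj])
  ultimately show ?thesis
    using distr_distr[OF measurable_snd measurable_coupling_map]
      pair_measure_distr[OF measurable_mal_inj measurable_mal_inj]
    by (simp add: mallows_N_def)
qed

lemma sets_Collect_eq_count_space:
  fixes f h :: "'a \<Rightarrow> 'b::countable"
  assumes "f \<in> M \<rightarrow>\<^sub>M count_space UNIV" "h \<in> M \<rightarrow>\<^sub>M count_space UNIV"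
  shows "{x \<in> space M. f x = h x} \<in> sets M"
proof -
  have "{x \<in> space M. f x = h x} = (\<Union>v. (f -` {v} \<inter> space M) \<inter> (h -` {v} \<inter> space M))" by auto
  also have "\<dots> \<in> sets M" using measurable_sets[OF assms(1)] measurable_sets[OF assms(2)] by auto
  finally show ?thesis .
qed

lemma sets_good_event: "good_event g n \<in> sets (NN \<Otimes>\<^sub>M NN \<Otimes>\<^sub>M NN)"
proof -
  let ?M = "NN \<Otimes>\<^sub>M NN \<Otimes>\<^sub>M NN"
  have space: "space ?M = UNIV" by (simp add: space_pair_measure space_PiM)
  have component: "(\<lambda>x. x i) \<in> NN \<rightarrow>\<^sub>M count_space UNIV" for i
    by (rule measurable_component_singleton) simp
  have m1: "(\<lambda>w. fst w i) \<in> ?M \<rightarrow>\<^sub>M count_space UNIV"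
    and m2: "(\<lambda>w. fst (snd w) i) \<in> ?M \<rightarrow>\<^sub>M count_space UNIV"
    and m3: "(\<lambda>w. snd (snd w) i) \<in> ?M \<rightarrow>\<^sub>M count_space UNIV" for i
    using measurable_comp[OF measurable_fst component]
      measurable_comp[OF measurable_comp[OF measurable_snd measurable_fst] component]
      measurable_comp[OF measurable_comp[OF measurable_snd measurable_snd] component]
    by (simp_all add: comp_def)
  have eq_set: "{w. f w = h w} \<in> sets ?M"
    if "f \<in> ?M \<rightarrow>\<^sub>M count_space UNIV" "h \<in> ?M \<rightarrow>\<^sub>M count_space UNIV" for f h :: "_ \<Rightarrow> nat"
    using sets_Collect_eq_count_space[OF that] by (simp add: space)
  have sum_meas: "(\<lambda>w. fst w i + snd (snd w) j) \<in> ?M \<rightarrow>\<^sub>M count_space UNIV" for i j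
  proof -
    have "(\<lambda>w. (fst w i, snd (snd w) j)) \<in> ?M \<rightarrow>\<^sub>M count_space UNIV"
      using measurable_Pair[OF m1 m3] by (simp add: pair_measure_countable)
    from measurable_comp[OF this, of "\<lambda>(a, b). a + b" "count_space UNIV"] show ?thesis
      by (simp add: comp_def)
  qed
  define L where "L i = {w :: (nat \<Rightarrow> nat) \<times> (nat \<Rightarrow> nat) \<times> (nat \<Rightarrow> nat). real i \<le> real n / 2 - g n \<and> 1 \<le> i \<longrightarrow> fst w i = fst (snd w) i}" for i
  define R where "R i = {w :: (nat \<Rightarrow> nat) \<times> (nat \<Rightarrow> nat) \<times> (nat \<Rightarrow> nat). real n / 2 + g n \<le> real i \<and> i \<le> n \<longrightarrow>
      fst w i + snd (snd w) (n + 1 - i) = n + 1}" for i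
  have "good_event g n = (\<Inter>i. L i) \<inter> (\<Inter>i. R i)"
    unfolding good_event_def L_def R_def by (auto simp: algebra_simps)
  moreover have "L i \<in> sets ?M" "R i \<in> sets ?M" for i
  proof -
    have UNIV: "UNIV \<in> sets ?M" using sets.top[of ?M] by (simp add: space)
    have "L i = UNIV \<or> L i = {w. fst w i = fst (snd w) i}" unfolding L_def by auto
    then show "L i \<in> sets ?M" using UNIV eq_set[OF m1 m2] by auto
    have "R i = UNIV \<or> R i = {w. fst w i + snd (snd w) (n + 1 - i) = (\<lambda>_. n + 1) w}"
      unfolding R_def by auto
    then show "R i \<in> sets ?M" using UNIV eq_set[OF sum_meas measurable_const] by auto
  qed
  ultimately show ?thesis by auto
qed

definition bad_seqs :: "nat \<Rightarrow> nat \<Rightarrow> (nat \<Rightarrow> nat) set" where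
  "bad_seqs c m0 = {Z. \<exists>s<m0. c - s \<le> Z s}"

lemma mal_inj_le_if_not_bad:
  assumes "Z \<notin> bad_seqs c m0" "m0 \<le> c" "k \<in> {1..m0}"
  shows "mal_inj Z k \<le> c"
proof -
  have "k - 1 < m0" using assms(3) by auto
  then have "Z (k - 1) < c - (k - 1)" using assms(1) unfolding bad_seqs_def
    by (metis (no_types, lifting) mem_Collect_eq not_le)
  then show ?thesis using mal_inj_Suc_le[of Z "k - 1"] assms(2,3) by auto
qed

lemma sum_power_diff_le:
  fixes q :: real
  assumes q: "0 \<le> q" "q < 1" and m: "m \<le> c"
  shows "(\<Sum>s<m. q ^ (c - s)) \<le> q ^ (c + 1 - m) / (1 - q)"
proof -
  have "q ^ (c - s) = q ^ (c + 1 - m) * q ^ (m - Suc s)" if "s < m" for s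
  proof -
    have "c - s = (c + 1 - m) + (m - Suc s)" using that m by simp
    then show ?thesis by (simp add: power_add)
  qed
  then have "(\<Sum>s<m. q ^ (c - s)) = q ^ (c + 1 - m) * (\<Sum>s<m. q ^ (m - Suc s))"
    by (simp add: sum_distrib_left)
  also have "(\<Sum>s<m. q ^ (m - Suc s)) = (\<Sum>s<m. q ^ s)" by (rule sum.nat_diff_reindex)
  also have "\<dots> = (1 - q ^ m) / (1 - q)" using q by (simp add: sum_gp_strict)
  also have "q ^ (c + 1 - m) * ((1 - q ^ m) / (1 - q)) \<le> q ^ (c + 1 - m) * (1 / (1 - q))"
    using q by (intro mult_left_mono divide_right_mono) auto
  finally show ?thesis by simp
qed

lemma measure_bad_seqs:
  assumes q: "0 < q" "q < 1" and m0: "m0 \<le> c"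
  shows "bad_seqs c m0 \<in> sets (geom_seqs q)"
    and "measure (geom_seqs q) (bad_seqs c m0) \<le> q ^ (c + 1 - m0) / (1 - q)"
proof -
  define E where "E s = {Z. \<forall>j\<in>{s}. Z j \<in> {c - s..}}" for s
  have E: "E s \<in> sets (geom_seqs q)" "measure (geom_seqs q) (E s) = q ^ (c - s)" for s
    using geom_seqs_cylinder[where J="{s}" and A="\<lambda>_. {c - s..}" and q=q] emeasure_geom_atLeast[OF q]
    unfolding E_def using q by (simp_all add: measure_def)
  have eq: "bad_seqs c m0 = (\<Union>s<m0. E s)" by (auto simp: bad_seqs_def E_def)
  show "bad_seqs c m0 \<in> sets (geom_seqs q)" unfolding eq using E(1) by auto
  have "measure (geom_seqs q) (bad_seqs c m0) \<le> (\<Sum>s<m0. measure (geom_seqs q) (E s))"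
    unfolding eq by (rule measure_UNION_le) (auto intro: E(1))
  also have "\<dots> \<le> q ^ (c + 1 - m0) / (1 - q)"
    unfolding E(2) using q m0 by (intro sum_power_diff_le) auto
  finally show "measure (geom_seqs q) (bad_seqs c m0) \<le> q ^ (c + 1 - m0) / (1 - q)" .
qed

lemma coupling_threshold_le:
  assumes "1 \<le> g n" "2 \<le> n"
  shows "2 * (nat \<lfloor>real n / 2 - g n\<rfloor> + 1) \<le> n"
proof -
  have "real (nat \<lfloor>real n / 2 - g n\<rfloor>) \<le> max 0 (real n / 2 - g n)"
    by (cases "0 \<le> real n / 2 - g n") auto
  then show ?thesis using assms by (auto simp: max_def) linarith+
qed

lemma coupling_map_in_good_event:
  assumes gn: "1 \<le> g n" and n: "2 \<le> n"
    and not_bad: "fst \<omega> \<notin> bad_seqs (n div 2) (nat \<lfloor>real n / 2 - g n\<rfloor> + 1)"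
      "snd \<omega> \<notin> bad_seqs (n div 2) (nat \<lfloor>real n / 2 - g n\<rfloor> + 1)"
  shows "coupling_map n \<omega> \<in> good_event g n"
proof -
  define c where "c = n div 2"
  define m0 where "m0 = nat \<lfloor>real n / 2 - g n\<rfloor> + 1"
  have m0: "2 * m0 \<le> n" using coupling_threshold_le[where g=g and n=n, OF gn n] unfolding m0_def .
  then have m0c: "m0 \<le> c" "c \<le> n" using div_le_mono[OF m0, of 2] unfolding c_def by simp_all
  have left: "mal_inj (fst \<omega>) k \<le> c" and right: "mal_inj (snd \<omega>) k \<le> n - c" if "k \<in> {1..m0}" for k
    using mal_inj_le_if_not_bad[OF not_bad(1)[folded c_def m0_def] m0c(1) that]
      mal_inj_le_if_not_bad[OF not_bad(2)[folded c_def m0_def] m0c(1) that]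
    unfolding c_def by linarith+
  note agree = inward_fill_agrees_mal_inj[OF m0 m0c(2) left right]
  have "mallows_fill n \<omega> i = mal_inj (fst \<omega>) i" if "1 \<le> i" "real i \<le> real n / 2 - g n" for i
  proof -
    have "i \<le> m0" using that unfolding m0_def by linarith
    then show ?thesis using agree(1)[of i] that m0 by (simp add: mallows_fill_def)
  qed
  moreover have "int (mallows_fill n \<omega> i) = int n + 1 - int (mal_inj (snd \<omega>) (n + 1 - i))"
    if "real n / 2 + g n \<le> real i" "i \<le> n" for i
  proof -
    have "n + 1 - i \<le> m0" using that unfolding m0_def by linarith
    moreover have "1 \<le> i" using that gn by linarith
    ultimately have "mallows_fill n \<omega> i = n + 1 - mal_inj (snd \<omega>) (n + 1 - i)"
      using agree(2)[of i] that by (simp add: mallows_fill_def)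
    moreover have "mal_inj (snd \<omega>) (n + 1 - i) \<le> n - c"
      using right[of "n + 1 - i"] \<open>n + 1 - i \<le> m0\<close> that by auto
    ultimately show ?thesis by simp
  qed
  ultimately show ?thesis unfolding coupling_map_def good_event_def
    by (simp only: mem_Collect_eq case_prod_conv) blast
qed

lemma measure_good_event_ge:
  assumes q: "0 < q" "q < 1" and gn: "1 \<le> g n" and n: "2 \<le> n"
  shows "1 - 2 * q ^ (n div 2 - nat \<lfloor>real n / 2 - g n\<rfloor>) / (1 - q) \<le>
    measure (distr (geom_seqs q \<Otimes>\<^sub>M geom_seqs q) (NN \<Otimes>\<^sub>M NN \<Otimes>\<^sub>M NN) (coupling_map n)) (good_event g n)"
proof -
  define c where "c = n div 2"
  define m0 where "m0 = nat \<lfloor>real n / 2 - g n\<rfloor> + 1"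
  define B where "B = bad_seqs c m0"
  interpret P: prob_space "geom_seqs q" by (rule prob_space_geom_seqs)
  interpret PP: prob_space "geom_seqs q \<Otimes>\<^sub>M geom_seqs q" by (intro prob_space_pair P.prob_space_axioms)
  have "m0 \<le> c"
    using div_le_mono[OF coupling_threshold_le[where g=g and n=n, OF gn n], of 2] unfolding m0_def c_def by simp
  note B = measure_bad_seqs[OF q this, folded B_def]
  have U: "UNIV \<in> sets (geom_seqs q)" using sets.top[of "geom_seqs q"] by simp
  have "emeasure (geom_seqs q) UNIV = 1" using P.emeasure_space_1 by simp
  have B_times: "measure (geom_seqs q \<Otimes>\<^sub>M geom_seqs q) (B \<times> UNIV) = measure (geom_seqs q) B"
    "measure (geom_seqs q \<Otimes>\<^sub>M geom_seqs q) (UNIV \<times> B) = measure (geom_seqs q) B"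
    using P.emeasure_pair_measure_Times[OF B(1) U] P.emeasure_pair_measure_Times[OF U B(1)]
    by (simp_all add: measure_def \<open>emeasure (geom_seqs q) UNIV = 1\<close>)
  have sets_B: "B \<times> UNIV \<in> PP.events" "UNIV \<times> B \<in> PP.events"
    using B(1) U by auto
  have good: "coupling_map n -` good_event g n \<in> PP.events"
    using measurable_sets[OF measurable_coupling_map sets_good_event] by (simp add: space_pair_measure)
  have "UNIV - (B \<times> UNIV \<union> UNIV \<times> B) \<subseteq> coupling_map n -` good_event g n"
  proof
    fix \<omega> assume "\<omega> \<in> UNIV - (B \<times> UNIV \<union> UNIV \<times> B)"
    then have "fst \<omega> \<notin> B" "snd \<omega> \<notin> B" by (auto simp: mem_Times_iff)
    then show "\<omega> \<in> coupling_map n -` good_event g n"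
      using coupling_map_in_good_event[where g=g and n=n, OF gn n] unfolding B_def c_def m0_def by simp
  qed
  then have "PP.prob (UNIV - (B \<times> UNIV \<union> UNIV \<times> B)) \<le> PP.prob (coupling_map n -` good_event g n)"
    by (rule PP.finite_measure_mono[OF _ good])
  moreover have "PP.prob (UNIV - (B \<times> UNIV \<union> UNIV \<times> B)) = 1 - PP.prob (B \<times> UNIV \<union> UNIV \<times> B)"
    using PP.prob_compl[of "B \<times> UNIV \<union> UNIV \<times> B"] sets_B by (simp add: space_pair_measure)
  ultimately have "1 - PP.prob (B \<times> UNIV \<union> UNIV \<times> B) \<le> PP.prob (coupling_map n -` good_event g n)"
    by simp
  moreover have "PP.prob (B \<times> UNIV \<union> UNIV \<times> B) \<le> 2 * q ^ (c + 1 - m0) / (1 - q)"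
    using measure_Un_le[OF sets_B] B(2) B_times by simp
  ultimately show ?thesis
    using measure_distr[OF measurable_coupling_map sets_good_event]
    by (simp add: m0_def c_def space_pair_measure)
qed

lemma tendsto_coupling_bound:
  fixes q :: real and g :: "nat \<Rightarrow> real"
  assumes q: "0 < q" "q < 1" and g: "filterlim g at_top sequentially"
  shows "(\<lambda>n. 1 - 2 * q ^ (n div 2 - nat \<lfloor>real n / 2 - g n\<rfloor>) / (1 - q)) \<longlonglongrightarrow> 1"
proof -
  have D: "filterlim (\<lambda>n. n div 2 - nat \<lfloor>real n / 2 - g n\<rfloor>) at_top sequentially"
    unfolding filterlim_at_top
  proof
    fix N :: nat
    have "eventually (\<lambda>n. real N + 1 \<le> g n) sequentially"
      using g by (simp add: filterlim_at_top)
    moreover have "eventually (\<lambda>n. 2 * N + 2 \<le> n) sequentially" by (rule eventually_ge_at_top)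
    ultimately show "eventually (\<lambda>n. N \<le> n div 2 - nat \<lfloor>real n / 2 - g n\<rfloor>) sequentially"
    proof eventually_elim
      case (elim n)
      have "real (nat \<lfloor>real n / 2 - g n\<rfloor>) \<le> max 0 (real n / 2 - g n)"
        by (cases "0 \<le> real n / 2 - g n") auto
      moreover have "real n / 2 - 1 / 2 \<le> real (n div 2)" by linarith
      ultimately have "real (N + nat \<lfloor>real n / 2 - g n\<rfloor>) \<le> real (n div 2)"
        using elim by (simp add: max_def split: if_split_asm; linarith)
      then show ?case by linarith
    qed
  qed
  have "(\<lambda>k. q ^ k) \<longlonglongrightarrow> 0" using LIMSEQ_power_zero[of q] q by simp
  from filterlim_compose[OF this D]
  have "(\<lambda>n. q ^ (n div 2 - nat \<lfloor>real n / 2 - g n\<rfloor>)) \<longlonglongrightarrow> 0" .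
  then have "(\<lambda>n. 2 * q ^ (n div 2 - nat \<lfloor>real n / 2 - g n\<rfloor>) / (1 - q)) \<longlonglongrightarrow> 2 * 0 / (1 - q)"
    using q by (intro tendsto_intros) auto
  from tendsto_diff[OF tendsto_const this, of 1] show ?thesis by simp
qed

theorem lemma4p1:
  fixes q :: real and g :: "nat \<Rightarrow> real"
  assumes "0 < q" "q < 1"
    and "filterlim g at_top sequentially"
  shows "\<exists>\<mu> :: nat \<Rightarrow> ((nat \<Rightarrow> nat) \<times> (nat \<Rightarrow> nat) \<times> (nat \<Rightarrow> nat)) measure.
     (\<forall>n. prob_space (\<mu> n) \<and> sets (\<mu> n) = sets (NN \<Otimes>\<^sub>M NN \<Otimes>\<^sub>M NN) \<and>
          distr (\<mu> n) NN fst = distr (measure_pmf (mallows n q)) NN id \<and>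
          distr (\<mu> n) (NN \<Otimes>\<^sub>M NN) snd = mallows_N q \<Otimes>\<^sub>M mallows_N q) \<and>
     ((\<lambda>n. measure (\<mu> n) (good_event g n)) \<longlonglongrightarrow> 1)"
proof -
  define \<mu> where "\<mu> n = distr (geom_seqs q \<Otimes>\<^sub>M geom_seqs q) (NN \<Otimes>\<^sub>M NN \<Otimes>\<^sub>M NN) (coupling_map n)" for n
  have prob: "prob_space (\<mu> n)" for n
    unfolding \<mu>_def
    by (intro prob_space.prob_space_distr prob_space_pair prob_space_geom_seqs measurable_coupling_map)
  have marginals: "prob_space (\<mu> n) \<and> sets (\<mu> n) = sets (NN \<Otimes>\<^sub>M NN \<Otimes>\<^sub>M NN) \<and>
      distr (\<mu> n) NN fst = distr (measure_pmf (mallows n q)) NN id \<and>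
      distr (\<mu> n) (NN \<Otimes>\<^sub>M NN) snd = mallows_N q \<Otimes>\<^sub>M mallows_N q" for n
    using prob[of n] distr_coupling_map_fst[OF assms(1,2), of n] distr_coupling_map_snd[of q n]
    unfolding \<mu>_def by simp
  have "eventually (\<lambda>n. 1 \<le> g n) sequentially" using assms(3) by (simp add: filterlim_at_top)
  moreover have "eventually (\<lambda>n. 2 \<le> n) sequentially" by (rule eventually_ge_at_top)
  ultimately have "eventually (\<lambda>n. 1 - 2 * q ^ (n div 2 - nat \<lfloor>real n / 2 - g n\<rfloor>) / (1 - q) \<le>
      measure (\<mu> n) (good_event g n)) sequentially"
  proof eventually_elim
    case (elim n)
    then show ?case unfolding \<mu>_def by (rule measure_good_event_ge[OF assms(1,2)])
  qed
  moreover have "eventually (\<lambda>n. measure (\<mu> n) (good_event g n) \<le> 1) sequentially"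
    by (intro always_eventually allI prob_space.prob_le_1[OF prob])
  ultimately have "(\<lambda>n. measure (\<mu> n) (good_event g n)) \<longlonglongrightarrow> 1"
    by (rule tendsto_sandwich[OF _ _ tendsto_coupling_bound[OF assms] tendsto_const])
  with marginals show ?thesis by blast
qed

end
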